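(* A vertex $v$ of a $2$-connected cubic graph $G$ is not $\lambda$-matchable if and only if there exists a barrier $B$ of $G$ such that $v$ is an isolated vertex of $G-B$.
   Context: Graphs are loopless but may have parallel edges. For a vertex $v$ of a $2$-connected cubic graph $G$, a $v$-matching is a spanning subgraph in which $v$ has degree $3$ and every other vertex has degree $1$; $v$ is $\lambda$-matchable if $G$ has a $v$-matching. A barrier of a graph $G$ with a perfect matching is a set $S\subseteq V(G)$ such that the number of components of odd order of $G-S$ equals $|S|$. *)

theory Defs
  imports Main
begin

text \<open>Parallel edges are allowed since distinct edges may have equal ends.\<close>

definition multigraph :: "'v set \<Rightarrow> 'e set \<Rightarrow> ('e \<Rightarrow> 'v set) \<Rightarrow> bool" where
  "multigraph V E ends \<longleftrightarrow> finite V \<and> finite E \<and>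
     (\<forall>e\<in>E. ends e \<subseteq> V \<and> card (ends e) = 2)"

definition degree :: "'e set \<Rightarrow> ('e \<Rightarrow> 'v set) \<Rightarrow> 'v \<Rightarrow> nat" where
  "degree F ends x = card {e\<in>F. x \<in> ends e}"

definition cubic :: "'v set \<Rightarrow> 'e set \<Rightarrow> ('e \<Rightarrow> 'v set) \<Rightarrow> bool" where
  "cubic V E ends \<longleftrightarrow> multigraph V E ends \<and> (\<forall>x\<in>V. degree E ends x = 3)"

definition adj_in :: "'v set \<Rightarrow> 'e set \<Rightarrow> ('e \<Rightarrow> 'v set) \<Rightarrow> 'v \<Rightarrow> 'v \<Rightarrow> bool" where
  "adj_in W E ends x y \<longleftrightarrow> x \<in> W \<and> y \<in> W \<and> x \<noteq> y \<and> (\<exists>e\<in>E. ends e = {x, y})"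

definition reach_in :: "'v set \<Rightarrow> 'e set \<Rightarrow> ('e \<Rightarrow> 'v set) \<Rightarrow> 'v \<Rightarrow> 'v \<Rightarrow> bool" where
  "reach_in W E ends = (adj_in W E ends)\<^sup>*\<^sup>*"

definition connected_in :: "'v set \<Rightarrow> 'e set \<Rightarrow> ('e \<Rightarrow> 'v set) \<Rightarrow> bool" where
  "connected_in W E ends \<longleftrightarrow> W \<noteq> {} \<and> (\<forall>x\<in>W. \<forall>y\<in>W. reach_in W E ends x y)"

definition two_connected :: "'v set \<Rightarrow> 'e set \<Rightarrow> ('e \<Rightarrow> 'v set) \<Rightarrow> bool" where
  "two_connected V E ends \<longleftrightarrow> multigraph V E ends \<and> card V \<ge> 3 \<and>
     connected_in V E ends \<and> (\<forall>x\<in>V. connected_in (V - {x}) E ends)"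

definition components_in :: "'v set \<Rightarrow> 'e set \<Rightarrow> ('e \<Rightarrow> 'v set) \<Rightarrow> 'v set set" where
  "components_in W E ends = (\<lambda>x. {y\<in>W. reach_in W E ends x y}) ` W"

definition odd_components :: "'v set \<Rightarrow> 'e set \<Rightarrow> ('e \<Rightarrow> 'v set) \<Rightarrow> 'v set \<Rightarrow> nat" where
  "odd_components V E ends S = card {C \<in> components_in (V - S) E ends. odd (card C)}"

definition perfect_matching :: "'v set \<Rightarrow> 'e set \<Rightarrow> ('e \<Rightarrow> 'v set) \<Rightarrow> 'e set \<Rightarrow> bool" where
  "perfect_matching V E ends M \<longleftrightarrow> M \<subseteq> E \<and> (\<forall>x\<in>V. degree M ends x = 1)"

definition v_matching :: "'v set \<Rightarrow> 'e set \<Rightarrow> ('e \<Rightarrow> 'v set) \<Rightarrow> 'v \<Rightarrow> 'e set \<Rightarrow> bool" where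
  "v_matching V E ends v F \<longleftrightarrow> F \<subseteq> E \<and> degree F ends v = 3 \<and>
     (\<forall>x\<in>V - {v}. degree F ends x = 1)"

definition lambda_matchable :: "'v set \<Rightarrow> 'e set \<Rightarrow> ('e \<Rightarrow> 'v set) \<Rightarrow> 'v \<Rightarrow> bool" where
  "lambda_matchable V E ends v \<longleftrightarrow> (\<exists>F. v_matching V E ends v F)"

definition barrier :: "'v set \<Rightarrow> 'e set \<Rightarrow> ('e \<Rightarrow> 'v set) \<Rightarrow> 'v set \<Rightarrow> bool" where
  "barrier V E ends S \<longleftrightarrow> (\<exists>M. perfect_matching V E ends M) \<and> S \<subseteq> V \<and>
     odd_components V E ends S = card S"

definition isolated_in_minus :: "'v set \<Rightarrow> 'e set \<Rightarrow> ('e \<Rightarrow> 'v set) \<Rightarrow> 'v set \<Rightarrow> 'v \<Rightarrow> bool" where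
  "isolated_in_minus V E ends B v \<longleftrightarrow> v \<in> V - B \<and>
     (\<forall>e\<in>E. v \<in> ends e \<longrightarrow> ends e - {v} \<subseteq> B)"

end

theory Submission
  imports Defs
begin

text \<open>
  If v is isolated in G - B for a barrier B, a v-matching F has too many edges at B: every
  vertex of B has F-degree 1, so at most |B| edges of F meet B, yet the three F-edges at v
  and, by parity, at least one F-edge leaving each of the other |B| - 1 odd components of
  G - B all end in B.

  Conversely, let N be the neighbourhood of v and W = V - v - N. If |N| = 3 and G[W] has a
  perfect matching, the three edges at v complete it to a v-matching. Otherwise Tutte's
  theorem provides T \<subseteq> W with o(W - T) \<ge> |T| + |N| - 2 (take T = {} when |N| \<le> 2), and
  B = N \<union> T has o(G - B) \<ge> |B| - 1, the extra odd component being {v}. In a 2-connected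
  cubic graph every odd component of G - S sends at least three edges to S, so
  o(G - S) \<le> |S| for all S (which also gives the perfect matching required of a barrier),
  and parity forces o(G - B) = |B|.

  Tutte's theorem is proved via a maximal barrier S of a graph satisfying Tutte's condition:
  the components of G - S are odd and factor-critical, and Hall's theorem matches them into S.
\<close>

section \<open>Components of a symmetric relation\<close>

definition adj_on :: "('v \<Rightarrow> 'v \<Rightarrow> bool) \<Rightarrow> 'v set \<Rightarrow> 'v \<Rightarrow> 'v \<Rightarrow> bool" where
  "adj_on A W x y \<longleftrightarrow> x \<in> W \<and> y \<in> W \<and> x \<noteq> y \<and> A x y"

definition components :: "('v \<Rightarrow> 'v \<Rightarrow> bool) \<Rightarrow> 'v set \<Rightarrow> 'v set set" where
  "components A W = (\<lambda>x. {y\<in>W. (adj_on A W)\<^sup>*\<^sup>* x y}) ` W"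

definition odd_comps :: "('v \<Rightarrow> 'v \<Rightarrow> bool) \<Rightarrow> 'v set \<Rightarrow> nat" where
  "odd_comps A W = card {C \<in> components A W. odd (card C)}"

definition adj_closed :: "('v \<Rightarrow> 'v \<Rightarrow> bool) \<Rightarrow> 'v set \<Rightarrow> 'v set \<Rightarrow> bool" where
  "adj_closed A U C \<longleftrightarrow> (\<forall>x\<in>C. \<forall>y\<in>U. A x y \<longrightarrow> y \<in> C)"

definition connected_on :: "('v \<Rightarrow> 'v \<Rightarrow> bool) \<Rightarrow> 'v set \<Rightarrow> bool" where
  "connected_on A C \<longleftrightarrow> (\<forall>x\<in>C. \<forall>y\<in>C. (adj_on A C)\<^sup>*\<^sup>* x y)"

lemma rtranclp_adj_on_mono:
  assumes "C \<subseteq> U" "(adj_on A C)\<^sup>*\<^sup>* x y"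
  shows "(adj_on A U)\<^sup>*\<^sup>* x y"
proof -
  have "adj_on A C \<le> adj_on A U" using assms(1) by (auto simp: adj_on_def)
  then show ?thesis using assms(2) rtranclp_mono by blast
qed

lemma adj_closed_rtranclp:
  assumes "adj_closed A U C" "x \<in> C" "(adj_on A U)\<^sup>*\<^sup>* x y"
  shows "y \<in> C"
  using assms(3,2) by induction (use assms(1) in \<open>auto simp: adj_closed_def adj_on_def\<close>)

lemma rtranclp_adj_on_sym:
  assumes "symp A" "(adj_on A U)\<^sup>*\<^sup>* x y"
  shows "(adj_on A U)\<^sup>*\<^sup>* y x"
  using assms(2)
proof induction
  case (step y z)
  then have "adj_on A U z y" using assms(1) by (auto simp: adj_on_def symp_def)
  then show ?case using step.IH by (rule converse_rtranclp_into_rtranclp)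
qed simp

lemma component_adj_closed_connected:
  assumes "symp A" "C \<in> components A U"
  shows "adj_closed A U C" "connected_on A C"
proof -
  obtain x where x: "x \<in> U" and C: "C = {y\<in>U. (adj_on A U)\<^sup>*\<^sup>* x y}"
    using assms(2) by (auto simp: components_def)
  show "adj_closed A U C"
    unfolding adj_closed_def
  proof (intro ballI impI)
    fix a b assume "a \<in> C" "b \<in> U" "A a b"
    then have "a = b \<or> adj_on A U a b" by (auto simp: adj_on_def C)
    then show "b \<in> C" using \<open>a \<in> C\<close> \<open>b \<in> U\<close> C by (auto intro: rtranclp.rtrancl_into_rtrancl)
  qed
  have reach_in_C: "(adj_on A C)\<^sup>*\<^sup>* x y" if "(adj_on A U)\<^sup>*\<^sup>* x y" for y
    using that
  proof induction
    case (step y z)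
    then have "adj_on A C y z"
      using x C by (auto simp: adj_on_def intro: rtranclp.rtrancl_into_rtrancl)
    then show ?case by (rule rtranclp.rtrancl_into_rtrancl[OF step.IH])
  qed simp
  show "connected_on A C"
    unfolding connected_on_def
  proof (intro ballI)
    fix a b assume "a \<in> C" "b \<in> C"
    then have "(adj_on A C)\<^sup>*\<^sup>* a x" "(adj_on A C)\<^sup>*\<^sup>* x b"
      using C reach_in_C rtranclp_adj_on_sym[OF assms(1)] by auto
    then show "(adj_on A C)\<^sup>*\<^sup>* a b" by (rule rtranclp_trans)
  qed
qed

lemma components_iff:
  assumes "symp A"
  shows "C \<in> components A U \<longleftrightarrow> C \<noteq> {} \<and> C \<subseteq> U \<and> adj_closed A U C \<and> connected_on A C"
proof
  assume "C \<in> components A U"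
  then show "C \<noteq> {} \<and> C \<subseteq> U \<and> adj_closed A U C \<and> connected_on A C"
    using component_adj_closed_connected[OF assms] by (auto simp: components_def)
next
  assume C: "C \<noteq> {} \<and> C \<subseteq> U \<and> adj_closed A U C \<and> connected_on A C"
  then obtain x where x: "x \<in> C" by auto
  have "C = {y\<in>U. (adj_on A U)\<^sup>*\<^sup>* x y}"
  proof (intro equalityI subsetI)
    fix y assume "y \<in> C"
    then show "y \<in> {y\<in>U. (adj_on A U)\<^sup>*\<^sup>* x y}"
      using C x rtranclp_adj_on_mono[of C U A x y] unfolding connected_on_def by blast
  next
    fix y assume "y \<in> {y\<in>U. (adj_on A U)\<^sup>*\<^sup>* x y}"
    then show "y \<in> C" using C x adj_closed_rtranclp[of A U C x y] by blast
  qed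
  then show "C \<in> components A U" using x C unfolding components_def by auto
qed

lemma components_subset: "C \<in> components A U \<Longrightarrow> C \<subseteq> U"
  unfolding components_def by auto

lemma connected_subset_component:
  assumes "symp A" "connected_on A C" "C \<subseteq> U" "D \<in> components A U" "x \<in> C" "x \<in> D"
  shows "C \<subseteq> D"
proof
  fix y assume "y \<in> C"
  then have "(adj_on A C)\<^sup>*\<^sup>* x y"
    using assms(2,5) by (simp add: connected_on_def)
  then have "(adj_on A U)\<^sup>*\<^sup>* x y"
    by (rule rtranclp_adj_on_mono[OF assms(3)])
  with component_adj_closed_connected(1)[OF assms(1,4)] assms(6) show "y \<in> D"
    by (rule adj_closed_rtranclp)
qed

lemma components_eqI:
  assumes "symp A" "C1 \<in> components A U" "C2 \<in> components A U" "x \<in> C1" "x \<in> C2"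
  shows "C1 = C2"
proof
  show "C1 \<subseteq> C2"
    using component_adj_closed_connected(2)[OF assms(1,2)] components_subset[OF assms(2)] assms(3-5)
    by (rule connected_subset_component[OF assms(1)])
  show "C2 \<subseteq> C1"
    using component_adj_closed_connected(2)[OF assms(1,3)] components_subset[OF assms(3)] assms(2,5,4)
    by (rule connected_subset_component[OF assms(1)])
qed

lemma components_disjoint:
  assumes "symp A" "C1 \<in> components A U" "C2 \<in> components A U" "C1 \<noteq> C2"
  shows "C1 \<inter> C2 = {}"
  using components_eqI[OF assms(1-3)] assms(4) by (metis disjoint_iff)

lemma component_of_subset:
  assumes "symp A" "C \<in> components A U" "C \<subseteq> U'" "U' \<subseteq> U"
  shows "C \<in> components A U'"
  using assms(2-4) unfolding components_iff[OF assms(1)] adj_closed_def by blast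

lemma component_of_superset:
  assumes "symp A" "C \<in> components A U" "U \<subseteq> U'"
    and "\<And>x y. x \<in> C \<Longrightarrow> y \<in> U' - U \<Longrightarrow> \<not> A x y"
  shows "C \<in> components A U'"
  using assms(2-4) unfolding components_iff[OF assms(1)] adj_closed_def by blast

lemma ex_component: "x \<in> U \<Longrightarrow> \<exists>C\<in>components A U. x \<in> C"
  unfolding components_def by auto

lemma Union_components: "\<Union>(components A U) = U"
proof
  show "\<Union>(components A U) \<subseteq> U" using components_subset[of _ A U] by (simp add: Sup_le_iff)
  show "U \<subseteq> \<Union>(components A U)" using ex_component[of _ U A] by (simp add: subset_iff)
qed

lemma finite_components: "finite U \<Longrightarrow> finite (components A U)"
  unfolding components_def by auto

lemma finite_component: "finite U \<Longrightarrow> C \<in> components A U \<Longrightarrow> finite C"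
  using finite_subset[OF components_subset] by blast

lemma sum_card_components:
  assumes "symp A" "finite U"
  shows "(\<Sum>C\<in>components A U. card C) = card U"
proof -
  have "card (\<Union>(components A U)) = (\<Sum>C\<in>components A U. card C)"
    by (rule card_Union_disjoint)
      (use components_disjoint[OF assms(1)] finite_component[OF assms(2)]
        in \<open>auto simp: pairwise_def disjnt_def\<close>)
  then show ?thesis by (simp add: Union_components)
qed

lemma odd_comps_parity:
  assumes "symp A" "finite U"
  shows "even (odd_comps A U) \<longleftrightarrow> even (card U)"
  using even_sum_iff[OF finite_components[OF assms(2)], of card A]
  by (simp add: odd_comps_def sum_card_components[OF assms])

lemma odd_comps_empty: "odd_comps A {} = 0"
  unfolding odd_comps_def components_def by simp

lemma singleton_component:
  assumes "symp A" "v \<in> U" "\<forall>y\<in>U. A v y \<longrightarrow> y = v"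
  shows "{v} \<in> components A U"
  using assms by (auto simp: components_iff adj_closed_def connected_on_def)

lemma components_Diff_subset:
  assumes s: "symp A" and D: "D \<in> components A U" and X: "X \<subseteq> D"
    and C: "C \<in> components A (U - X)"
  shows "C \<in> (components A U - {D}) \<union> components A (D - X)"
proof -
  obtain x where x: "x \<in> C" using C unfolding components_iff[OF s] by blast
  then obtain C' where C': "C' \<in> components A U" "x \<in> C'"
    using components_subset[OF C] ex_component[of x U A] by blast
  have conn: "connected_on A C" and CUX: "C \<subseteq> U - X"
    using C unfolding components_iff[OF s] by simp_all
  show ?thesis
  proof (cases "C' = D")
    case True
    then have "C \<subseteq> D - X"
      using connected_subset_component[OF s conn _ D x] C' CUX by blast
    then have "C \<in> components A (D - X)"
      using component_of_subset[OF s C] components_subset[OF D] by blast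
    then show ?thesis by simp
  next
    case False
    then have "C' \<subseteq> U - X"
      using components_disjoint[OF s C'(1) D] components_subset[OF C'(1)] X by blast
    then have "C' \<in> components A (U - X)"
      using component_of_subset[OF s C'(1)] by blast
    then show ?thesis using components_eqI[OF s C _ x C'(2)] C'(1) False by simp
  qed
qed

lemma components_Diff:
  assumes s: "symp A" and D: "D \<in> components A U" and X: "X \<subseteq> D"
  shows "components A (U - X) = (components A U - {D}) \<union> components A (D - X)"
proof (intro equalityI subsetI)
  fix C assume "C \<in> components A (U - X)"
  then show "C \<in> (components A U - {D}) \<union> components A (D - X)"
    by (rule components_Diff_subset[OF assms])
next
  fix C assume "C \<in> (components A U - {D}) \<union> components A (D - X)"
  then consider "C \<in> components A U" "C \<noteq> D" | "C \<in> components A (D - X)" by blast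
  then show "C \<in> components A (U - X)"
  proof cases
    case 1
    then have "C \<subseteq> U - X"
      using components_disjoint[OF s _ D] components_subset[of C A U] X by blast
    then show ?thesis using component_of_subset[OF s 1(1)] by blast
  next
    case 2
    have "adj_closed A U D" "D \<subseteq> U"
      using D unfolding components_iff[OF s] by simp_all
    with 2 show ?thesis
      unfolding components_iff[OF s] adj_closed_def by blast
  qed
qed

lemma odd_comps_Diff:
  assumes s: "symp A" and U: "finite U" and D: "D \<in> components A U" and X: "X \<subseteq> D"
  shows "odd_comps A (U - X) + of_bool (odd (card D)) = odd_comps A U + odd_comps A (D - X)"
proof -
  let ?O = "\<lambda>W. {C \<in> components A W. odd (card C)}"
  have split: "?O (U - X) = (?O U - {D}) \<union> ?O (D - X)"
    using components_Diff[OF s D X] by auto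
  have "(?O U - {D}) \<inter> ?O (D - X) = {}"
    using components_disjoint[OF s _ D] components_iff[OF s, of _ "D - X"] by fastforce
  moreover have "finite (?O W)" if "finite W" for W
    using finite_components[OF that] by simp
  moreover have "finite (D - X)"
    using finite_component[OF U D] by simp
  ultimately have "odd_comps A (U - X) = card (?O U - {D}) + card (?O (D - X))"
    unfolding odd_comps_def split using U by (simp add: card_Un_disjoint)
  moreover have "card (?O U - {D}) + of_bool (odd (card D)) = card (?O U)"
    using D finite_components[OF U]
    by (cases "odd (card D)") (simp_all add: card_Suc_Diff1 del: card_Diff_insert)
  ultimately show ?thesis unfolding odd_comps_def by simp
qed

lemma odd_comps_isolated:
  assumes "symp A" "finite U" "v \<in> U" "\<forall>y\<in>U. A v y \<longrightarrow> y = v"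
  shows "odd_comps A U = odd_comps A (U - {v}) + 1"
  using odd_comps_Diff[OF assms(1,2) singleton_component[OF assms(1,3,4)], of "{v}"]
  by (simp add: odd_comps_empty)

lemma odd_comps_Diff_parity:
  assumes "symp A" "finite V" "B \<subseteq> V" "even (card V)"
  shows "even (odd_comps A (V - B)) \<longleftrightarrow> even (card B)"
proof -
  have "card (V - B) + card B = card V"
    using assms(2,3) by (metis card_Diff_subset card_mono finite_subset le_add_diff_inverse2)
  then have "even (card (V - B)) \<longleftrightarrow> even (card B)"
    using assms(4) by (metis even_add)
  then show ?thesis
    using odd_comps_parity[OF assms(1), of "V - B"] assms(2) by simp
qed

section \<open>Hall's theorem\<close>

definition hall_condition :: "'i set \<Rightarrow> ('i \<Rightarrow> 'a set) \<Rightarrow> bool" where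
  "hall_condition I N \<longleftrightarrow> (\<forall>J\<subseteq>I. card J \<le> card (\<Union>(N ` J)))"

definition distinct_reps :: "'i set \<Rightarrow> ('i \<Rightarrow> 'a set) \<Rightarrow> ('i \<Rightarrow> 'a) \<Rightarrow> bool" where
  "distinct_reps I N f \<longleftrightarrow> inj_on f I \<and> (\<forall>i\<in>I. f i \<in> N i)"

lemma hall_condition_subset: "hall_condition I N \<Longrightarrow> J \<subseteq> I \<Longrightarrow> hall_condition J N"
  unfolding hall_condition_def by auto

lemma distinct_reps_mono:
  "distinct_reps I N f \<Longrightarrow> (\<And>i. i \<in> I \<Longrightarrow> N i \<subseteq> N' i) \<Longrightarrow> distinct_reps I N' f"
  unfolding distinct_reps_def by blast

lemma distinct_reps_combine:
  assumes J: "J \<subseteq> I" and f: "distinct_reps J N f"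
    and g: "distinct_reps (I - J) (\<lambda>i. N i - f ` J) g"
  shows "distinct_reps I N (\<lambda>i. if i \<in> J then f i else g i)" (is "distinct_reps I N ?h")
proof -
  have "inj_on ?h J" "inj_on ?h (I - J)"
    using f g by (simp_all add: distinct_reps_def inj_on_def)
  moreover have "?h ` J \<inter> ?h ` (I - J) = {}"
    using g by (force simp: distinct_reps_def)
  ultimately have "inj_on ?h (J \<union> (I - J))"
    by (subst inj_on_Un) (simp add: Diff_triv)
  moreover have "J \<union> (I - J) = I" using J by blast
  ultimately show ?thesis
    using f g by (auto simp: distinct_reps_def)
qed

lemma hall_condition_Diff_tight:
  assumes hall: "hall_condition I N" and I: "finite I" and N: "\<forall>i\<in>I. finite (N i)"
    and J: "J \<subseteq> I" "card (\<Union>(N ` J)) = card J"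
  shows "hall_condition (I - J) (\<lambda>i. N i - \<Union>(N ` J))"
  unfolding hall_condition_def
proof (intro allI impI)
  fix K assume K: "K \<subseteq> I - J"
  have KJ: "K \<union> J \<subseteq> I" "K \<inter> J = {}" using K J(1) by blast+
  have "finite K" "finite J"
    using finite_subset[OF K] finite_subset[OF J(1)] I by simp_all
  have fin: "finite (\<Union>(N ` (K \<union> J)))"
    using finite_subset[OF KJ(1) I] KJ(1) N by (intro finite_UN_I) auto
  have split: "\<Union>(N ` (K \<union> J)) = (\<Union>i\<in>K. N i - \<Union>(N ` J)) \<union> \<Union>(N ` J)" by blast
  have "finite (\<Union>i\<in>K. N i - \<Union>(N ` J))" "finite (\<Union>(N ` J))"
    using fin unfolding split by simp_all
  then have "card (\<Union>(N ` (K \<union> J))) = card (\<Union>i\<in>K. N i - \<Union>(N ` J)) + card (\<Union>(N ` J))"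
    unfolding split by (rule card_Un_disjoint) blast
  moreover have "card (K \<union> J) = card K + card J"
    using \<open>finite K\<close> \<open>finite J\<close> KJ(2) by (rule card_Un_disjoint)
  moreover have "card (K \<union> J) \<le> card (\<Union>(N ` (K \<union> J)))"
    using hall KJ(1) unfolding hall_condition_def by blast
  ultimately show "card K \<le> card (\<Union>i\<in>K. N i - \<Union>(N ` J))"
    using J(2) by linarith
qed

lemma hall_condition_remove:
  assumes hall: "hall_condition I N" and I: "finite I" and N: "\<forall>i\<in>I. finite (N i)"
    and no_tight: "\<not> (\<exists>J\<subseteq>I. J \<noteq> {} \<and> J \<noteq> I \<and> card (\<Union>(N ` J)) = card J)"
    and i0: "i0 \<in> I"
  obtains a where "a \<in> N i0" "hall_condition (I - {i0}) (\<lambda>i. N i - {a})"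
proof -
  have "card {i0} \<le> card (\<Union>(N ` {i0}))"
    using hall i0 unfolding hall_condition_def by blast
  then obtain a where a: "a \<in> N i0" by fastforce
  have "card K \<le> card (\<Union>i\<in>K. N i - {a})" if K: "K \<subseteq> I - {i0}" for K
  proof (cases "K = {}")
    case False
    have "card K \<le> card (\<Union>(N ` K))"
      using hall K unfolding hall_condition_def by blast
    moreover have "card (\<Union>(N ` K)) \<noteq> card K"
      using no_tight K i0 False by blast
    moreover have "card (\<Union>(N ` K)) - 1 \<le> card (\<Union>(N ` K) - {a})"
      by (simp add: card_Diff_singleton_if)
    ultimately have "card K \<le> card (\<Union>(N ` K) - {a})" by linarith
    moreover have "(\<Union>i\<in>K. N i - {a}) = \<Union>(N ` K) - {a}" by blast
    ultimately show ?thesis by simp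
  qed simp
  with a show ?thesis using that unfolding hall_condition_def by blast
qed

theorem hall_marriage:
  assumes "finite I" "\<forall>i\<in>I. finite (N i)" "hall_condition I N"
  shows "\<exists>f. distinct_reps I N f"
  using assms
proof (induction "card I" arbitrary: I N rule: less_induct)
  case less
  note I = less.prems(1) and N = less.prems(2) and hall = less.prems(3)
  let ?tight = "\<lambda>J. J \<subseteq> I \<and> J \<noteq> {} \<and> J \<noteq> I \<and> card (\<Union>(N ` J)) = card J"
  consider "I = {}" | J where "?tight J" | i0 where "i0 \<in> I" "\<not> (\<exists>J. ?tight J)"
    by blast
  then show ?case
  proof cases
    case 1
    then show ?thesis by (auto simp: distinct_reps_def)
  next
    case (2 J)
    then have J: "J \<subseteq> I" "card (\<Union>(N ` J)) = card J" "J \<subset> I" "I - J \<subset> I" by blast+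
    then have "card J < card I" "card (I - J) < card I"
      using I by (simp_all add: psubset_card_mono)
    have "finite J" "\<forall>i\<in>J. finite (N i)"
      using finite_subset[OF J(1) I] J(1) N by auto
    from less.hyps[OF \<open>card J < card I\<close> this hall_condition_subset[OF hall J(1)]]
    obtain f where f: "distinct_reps J N f" ..
    have "finite (I - J)" "\<forall>i\<in>I - J. finite (N i - \<Union>(N ` J))"
      using I N by auto
    from less.hyps[OF \<open>card (I - J) < card I\<close> this hall_condition_Diff_tight[OF hall I N J(1,2)]]
    obtain g where "distinct_reps (I - J) (\<lambda>i. N i - \<Union>(N ` J)) g" ..
    then have "distinct_reps (I - J) (\<lambda>i. N i - f ` J) g"
      by (rule distinct_reps_mono) (use f in \<open>auto simp: distinct_reps_def\<close>)
    then show ?thesis using distinct_reps_combine[OF J(1) f] by blast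
  next
    case (3 i0)
    obtain a where a: "a \<in> N i0" and hall': "hall_condition (I - {i0}) (\<lambda>i. N i - {a})"
      using hall_condition_remove[OF hall I N 3(2,1)] .
    have "card (I - {i0}) < card I" "finite (I - {i0})" "\<forall>i\<in>I - {i0}. finite (N i - {a})"
      using card_Diff1_less[OF I 3(1)] I N by auto
    from less.hyps[OF this hall']
    obtain g where "distinct_reps (I - {i0}) (\<lambda>i. N i - {a}) g" ..
    moreover have "distinct_reps {i0} N (\<lambda>_. a)"
      using a by (simp add: distinct_reps_def)
    ultimately show ?thesis
      using distinct_reps_combine[of "{i0}" I N "\<lambda>_. a"] 3(1) by auto
  qed
qed

section \<open>Tutte's theorem\<close>

definition matching_involution :: "('v \<Rightarrow> 'v \<Rightarrow> bool) \<Rightarrow> 'v set \<Rightarrow> ('v \<Rightarrow> 'v) \<Rightarrow> bool" where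
  "matching_involution A W m \<longleftrightarrow> (\<forall>x\<in>W. m x \<in> W \<and> m x \<noteq> x \<and> A x (m x) \<and> m (m x) = x)"

definition tutte_condition :: "('v \<Rightarrow> 'v \<Rightarrow> bool) \<Rightarrow> 'v set \<Rightarrow> bool" where
  "tutte_condition A W \<longleftrightarrow> (\<forall>S\<subseteq>W. odd_comps A (W - S) \<le> card S)"

lemma matching_involution_insert_edge:
  assumes "matching_involution A P m" "a \<notin> P" "b \<notin> P" "a \<noteq> b" "A a b" "A b a"
  shows "matching_involution A (insert a (insert b P)) (m(a := b, b := a))"
  using assms unfolding matching_involution_def by auto

lemma matching_involution_Un:
  assumes "matching_involution A P m1" "matching_involution A Q m2" "P \<inter> Q = {}"
  shows "matching_involution A (P \<union> Q) (\<lambda>x. if x \<in> P then m1 x else m2 x)"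
  using assms unfolding matching_involution_def by (auto simp: disjoint_iff)

lemma matching_involution_Union:
  assumes "finite F" "\<forall>P\<in>F. \<forall>Q\<in>F. P \<noteq> Q \<longrightarrow> P \<inter> Q = {}"
    "\<forall>P\<in>F. \<exists>m. matching_involution A P m"
  shows "\<exists>m. matching_involution A (\<Union>F) m"
  using assms
proof (induction F rule: finite_induct)
  case empty
  then show ?case by (simp add: matching_involution_def)
next
  case (insert P F)
  then obtain m1 m2 where "matching_involution A P m1" "matching_involution A (\<Union>F) m2"
    by auto
  moreover have "P \<inter> \<Union>F = {}" using insert by auto
  ultimately have "matching_involution A (P \<union> \<Union>F) (\<lambda>x. if x \<in> P then m1 x else m2 x)"
    by (rule matching_involution_Un)
  then show ?case by auto
qed

locale maximal_barrier =
  fixes A :: "'v \<Rightarrow> 'v \<Rightarrow> bool" and W S :: "'v set"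
  assumes sym: "symp A" and finite: "finite W" and tutte: "tutte_condition A W"
    and subset: "S \<subseteq> W" and tight: "odd_comps A (W - S) = card S"
    and maximal: "\<And>T. T \<subseteq> W \<Longrightarrow> odd_comps A (W - T) = card T \<Longrightarrow> card T \<le> card S"
begin

lemma finite_S: "finite S"
  using finite_subset[OF subset finite] .

text \<open>Otherwise S \<union> X would be a barrier larger than S.\<close>

lemma odd_comps_component_Diff_less:
  assumes D: "D \<in> components A (W - S)" and X: "X \<subseteq> D" "X \<noteq> {}"
  shows "odd_comps A (D - X) < card X + of_bool (odd (card D))"
proof (rule ccontr)
  assume large: "\<not> ?thesis"
  have "finite X" using finite_subset[OF X(1) finite_component[OF _ D]] finite by simp
  have disj: "S \<inter> X = {}" using components_subset[OF D] X(1) by blast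
  have T: "S \<union> X \<subseteq> W" using components_subset[OF D] X(1) subset by blast
  have "W - (S \<union> X) = (W - S) - X" by blast
  then have "odd_comps A (W - (S \<union> X)) + of_bool (odd (card D)) = card S + odd_comps A (D - X)"
    using odd_comps_Diff[OF sym _ D X(1)] finite tight by simp
  then have "card (S \<union> X) \<le> odd_comps A (W - (S \<union> X))"
    using large card_Un_disjoint[OF finite_S \<open>finite X\<close> disj] by simp
  moreover have "odd_comps A (W - (S \<union> X)) \<le> card (S \<union> X)"
    using tutte T unfolding tutte_condition_def by blast
  ultimately have "card (S \<union> X) \<le> card S"
    using maximal[OF T] by simp
  then show False
    using card_Un_disjoint[OF finite_S \<open>finite X\<close> disj] X \<open>finite X\<close> by simp
qed

lemma components_odd:
  assumes D: "D \<in> components A (W - S)"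
  shows "odd (card D)"
proof (rule ccontr)
  assume even: "\<not> odd (card D)"
  obtain x where x: "x \<in> D" using D unfolding components_iff[OF sym] by blast
  have "finite D" using finite_component[OF _ D] finite by simp
  then have "card D > 0" using x by (auto simp: card_gt_0_iff)
  then have "odd (card (D - {x}))"
    using x even by (simp add: card_Diff_singleton_if)
  then have "odd (odd_comps A (D - {x}))"
    using odd_comps_parity[OF sym] \<open>finite D\<close> by simp
  moreover have "odd_comps A (D - {x}) < 1"
    using odd_comps_component_Diff_less[OF D, of "{x}"] x even by simp
  ultimately show False by simp
qed

lemma tutte_condition_component_Diff:
  assumes C: "C \<in> components A (W - S)" and x: "x \<in> C"
  shows "tutte_condition A (C - {x})"
  unfolding tutte_condition_def
proof (intro allI impI)
  fix T assume T: "T \<subseteq> C - {x}"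
  have "finite C" using finite_component[OF _ C] finite by simp
  have X: "insert x T \<subseteq> C" using T x by blast
  have card_X: "card (insert x T) = card T + 1"
    using T finite_subset[OF T] \<open>finite C\<close> by (simp add: subset_Diff_insert)
  have "odd_comps A (C - insert x T) < card (insert x T) + 1"
    using odd_comps_component_Diff_less[OF C X] components_odd[OF C] by simp
  moreover have C_X: "C - insert x T = C - {x} - T" by blast
  ultimately have less: "odd_comps A (C - {x} - T) < card T + 2"
    using card_X by simp
  have "card (C - insert x T) = card C - card (insert x T)"
    using card_Diff_subset[OF finite_subset[OF X \<open>finite C\<close>] X] .
  moreover have "card (insert x T) \<le> card C" using card_mono[OF \<open>finite C\<close> X] .
  ultimately have "card (C - {x} - T) + card T + 1 = card C"
    using card_X C_X by simp
  then have "even (card (C - {x} - T)) \<longleftrightarrow> even (card T)"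
    using components_odd[OF C] by presburger
  then have "even (odd_comps A (C - {x} - T)) \<longleftrightarrow> even (card T)"
    using odd_comps_parity[OF sym, of "C - {x} - T"] \<open>finite C\<close> by simp
  with less show "odd_comps A (C - {x} - T) \<le> card T"
    by (cases "odd_comps A (C - {x} - T) = card T + 1") auto
qed

lemma hall_condition_components:
  "hall_condition (components A (W - S)) (\<lambda>C. {s\<in>S. \<exists>y\<in>C. A y s})"
  unfolding hall_condition_def
proof (intro allI impI)
  fix J assume J: "J \<subseteq> components A (W - S)"
  let ?T = "\<Union>C\<in>J. {s\<in>S. \<exists>y\<in>C. A y s}"
  have T: "?T \<subseteq> W" using subset by blast
  have "J \<subseteq> {C \<in> components A (W - ?T). odd (card C)}"
  proof
    fix C assume "C \<in> J"
    then have C: "C \<in> components A (W - S)" using J by blast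
    have "C \<in> components A (W - ?T)"
    proof (rule component_of_superset[OF sym C])
      show "W - S \<subseteq> W - ?T" by blast
      show "\<not> A x y" if "x \<in> C" "y \<in> (W - ?T) - (W - S)" for x y
        using that \<open>C \<in> J\<close> by blast
    qed
    then show "C \<in> {C \<in> components A (W - ?T). odd (card C)}"
      using components_odd[OF C] by simp
  qed
  then have "card J \<le> odd_comps A (W - ?T)"
    unfolding odd_comps_def using finite by (simp add: card_mono finite_components)
  also have "\<dots> \<le> card ?T"
    using tutte T unfolding tutte_condition_def by blast
  finally show "card J \<le> card ?T" .
qed

lemma image_distinct_reps_components:
  assumes "distinct_reps (components A (W - S)) (\<lambda>C. {s\<in>S. \<exists>y\<in>C. A y s}) f"
  shows "f ` components A (W - S) = S"
proof (rule card_subset_eq[OF finite_S])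
  show "f ` components A (W - S) \<subseteq> S" using assms unfolding distinct_reps_def by blast
  have "{C \<in> components A (W - S). odd (card C)} = components A (W - S)"
    using components_odd by blast
  then show "card (f ` components A (W - S)) = card S"
    using assms tight unfolding odd_comps_def distinct_reps_def by (simp add: card_image)
qed

lemma insert_reps_disjoint:
  assumes f: "distinct_reps (components A (W - S)) (\<lambda>C. {s\<in>S. \<exists>y\<in>C. A y s}) f"
    and C: "C1 \<in> components A (W - S)" "C2 \<in> components A (W - S)" "C1 \<noteq> C2"
  shows "insert (f C1) C1 \<inter> insert (f C2) C2 = {}"
proof -
  have "C1 \<inter> C2 = {}" "f C1 \<noteq> f C2"
    using components_disjoint[OF sym C] f C unfolding distinct_reps_def inj_on_def by auto
  moreover have "f C1 \<in> S" "f C2 \<in> S" "C1 \<subseteq> W - S" "C2 \<subseteq> W - S"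
    using f C components_subset unfolding distinct_reps_def by blast+
  ultimately show ?thesis by blast
qed

lemma matching_involution_component_insert:
  assumes C: "C \<in> components A (W - S)" and s: "s \<in> S" and y: "y \<in> C" "A y s"
    and m: "matching_involution A (C - {y}) m"
  shows "matching_involution A (insert s C) (m(y := s, s := y))"
proof -
  have "s \<notin> C" using components_subset[OF C] s by blast
  then have "matching_involution A (insert y (insert s (C - {y}))) (m(y := s, s := y))"
    using matching_involution_insert_edge[OF m] y sym by (auto simp: symp_def)
  moreover have "insert y (insert s (C - {y})) = insert s C" using y by blast
  ultimately show ?thesis by simp
qed

lemma matching_involution_if_factor_critical:
  assumes factor_critical:
    "\<And>C x. C \<in> components A (W - S) \<Longrightarrow> x \<in> C \<Longrightarrow> \<exists>m. matching_involution A (C - {x}) m"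
  shows "\<exists>m. matching_involution A W m"
proof -
  let ?I = "components A (W - S)"
  have I: "finite ?I" using finite by (simp add: finite_components)
  obtain f where f: "distinct_reps ?I (\<lambda>C. {s\<in>S. \<exists>y\<in>C. A y s}) f"
    using hall_marriage[OF I _ hall_condition_components] finite_S by auto
  note onto = image_distinct_reps_components[OF f]
  let ?P = "(\<lambda>C. insert (f C) C) ` ?I"
  have "\<exists>m. matching_involution A (insert (f C) C) m" if C: "C \<in> ?I" for C
  proof -
    obtain y where y: "f C \<in> S" "y \<in> C" "A y (f C)"
      using f C unfolding distinct_reps_def by blast
    obtain m where "matching_involution A (C - {y}) m"
      using factor_critical[OF C y(2)] by blast
    from matching_involution_component_insert[OF C y this] show ?thesis by blast
  qed
  moreover have "P \<inter> Q = {}" if PQ: "P \<in> ?P" "Q \<in> ?P" "P \<noteq> Q" for P Q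
  proof -
    obtain C1 C2 where C: "C1 \<in> ?I" "C2 \<in> ?I" "C1 \<noteq> C2"
      and P: "P = insert (f C1) C1" and Q: "Q = insert (f C2) C2"
      using PQ by blast
    show ?thesis unfolding P Q by (rule insert_reps_disjoint[OF f C])
  qed
  moreover have "\<Union>?P = W"
  proof -
    have "\<Union>?P = f ` ?I \<union> \<Union>?I" by blast
    then show ?thesis using onto Union_components[of A "W - S"] subset by auto
  qed
  ultimately show ?thesis
    using matching_involution_Union[of ?P A] I by auto
qed

end

lemma ex_maximal_barrier:
  assumes "symp A" "finite W" "tutte_condition A W"
  shows "\<exists>S. maximal_barrier A W S"
proof -
  let ?B = "{S. S \<subseteq> W \<and> odd_comps A (W - S) = card S}"
  have "odd_comps A W = 0"
    using assms(3)[unfolded tutte_condition_def, rule_format, of "{}"] by simp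
  then have "{} \<in> ?B" by simp
  moreover have "card S < Suc (card W)" if "S \<in> ?B" for S
    using that assms(2) by (simp add: card_mono le_imp_less_Suc)
  ultimately obtain S where S: "S \<in> ?B" "\<And>T. T \<in> ?B \<Longrightarrow> card T \<le> card S"
    using ex_has_greatest_nat[of "\<lambda>S. S \<in> ?B" "{}" card "Suc (card W)"] by blast
  have "maximal_barrier A W S"
    by unfold_locales (use assms S in auto)
  then show ?thesis ..
qed

theorem tutte_matching:
  assumes "symp A" "finite W" "tutte_condition A W"
  shows "\<exists>m. matching_involution A W m"
  using assms(2,3)
proof (induction "card W" arbitrary: W rule: less_induct)
  case less
  then obtain S where "maximal_barrier A W S"
    using ex_maximal_barrier[OF assms(1)] by blast
  then interpret maximal_barrier A W S .
  show ?case
  proof (rule matching_involution_if_factor_critical)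
    fix C x assume C: "C \<in> components A (W - S)" and x: "x \<in> C"
    have "finite C" "C \<subseteq> W"
      using finite_component[OF _ C] components_subset[OF C] finite by auto
    then have "card (C - {x}) < card W"
      using card_Diff1_less[OF \<open>finite C\<close> x] card_mono[OF finite] by (meson order_less_le_trans)
    then show "\<exists>m. matching_involution A (C - {x}) m"
      using less.hyps \<open>finite C\<close> tutte_condition_component_Diff[OF C x] by blast
  qed
qed

section \<open>Cut edges in multigraphs\<close>

definition edge_adj :: "'e set \<Rightarrow> ('e \<Rightarrow> 'v set) \<Rightarrow> 'v \<Rightarrow> 'v \<Rightarrow> bool" where
  "edge_adj E ends x y \<longleftrightarrow> (\<exists>e\<in>E. ends e = {x, y})"

lemma symp_edge_adj: "symp (edge_adj E ends)"
  unfolding symp_def edge_adj_def by (metis insert_commute)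

lemma adj_in_eq_adj_on: "adj_in W E ends = adj_on (edge_adj E ends) W"
  by (auto simp: fun_eq_iff adj_in_def adj_on_def edge_adj_def)

lemma odd_components_eq_odd_comps:
  "odd_components V E ends S = odd_comps (edge_adj E ends) (V - S)"
  unfolding odd_components_def odd_comps_def components_in_def components_def reach_in_def
    adj_in_eq_adj_on ..

lemma connected_in_iff:
  "connected_in W E ends \<longleftrightarrow> W \<noteq> {} \<and> (\<forall>x\<in>W. \<forall>y\<in>W. (adj_on (edge_adj E ends) W)\<^sup>*\<^sup>* x y)"
  unfolding connected_in_def reach_in_def adj_in_eq_adj_on ..

lemma multigraphD:
  assumes "multigraph V E ends"
  shows "finite V" "finite E" "e \<in> E \<Longrightarrow> ends e \<subseteq> V" "e \<in> E \<Longrightarrow> card (ends e) = 2"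
  using assms unfolding multigraph_def by auto

lemma multigraph_edge_at:
  assumes "multigraph V E ends" "e \<in> E" "v \<in> ends e"
  obtains y where "y \<noteq> v" "y \<in> V" "ends e = {v, y}"
proof -
  obtain a b where ab: "a \<noteq> b" "ends e = {a, b}"
    using multigraphD(4)[OF assms(1,2)] by (meson card_2_iff)
  then consider "v = a" | "v = b" using assms(3) by blast
  then show ?thesis
    using that[of b] that[of a] ab multigraphD(3)[OF assms(1,2)] by cases (auto simp: insert_commute)
qed

definition cut_edges :: "'e set \<Rightarrow> ('e \<Rightarrow> 'v set) \<Rightarrow> 'v set \<Rightarrow> 'e set" where
  "cut_edges F ends C = {e\<in>F. card (ends e \<inter> C) = 1}"

lemma cut_edges_singleton: "cut_edges F ends {x} = {e\<in>F. x \<in> ends e}"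
  unfolding cut_edges_def by (auto simp: Int_insert_right)

lemma sum_degree:
  assumes "finite F" "finite C"
  shows "(\<Sum>x\<in>C. degree F ends x) = (\<Sum>e\<in>F. card (ends e \<inter> C))"
proof -
  have "(\<Sum>x\<in>C. degree F ends x) = (\<Sum>x\<in>C. \<Sum>e\<in>F. of_bool (x \<in> ends e))"
    unfolding degree_def using assms(1) by (simp add: Int_def)
  also have "\<dots> = (\<Sum>e\<in>F. \<Sum>x\<in>C. of_bool (x \<in> ends e))"
    by (rule sum.swap)
  also have "\<dots> = (\<Sum>e\<in>F. card (ends e \<inter> C))"
    using assms(2) by (simp add: Int_def conj_commute)
  finally show ?thesis .
qed

lemma even_sum_degree_iff:
  assumes "finite F" "finite C" "\<forall>e\<in>F. card (ends e) = 2"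
  shows "even (\<Sum>x\<in>C. degree F ends x) \<longleftrightarrow> even (card (cut_edges F ends C))"
proof -
  have "odd (card (ends e \<inter> C)) \<longleftrightarrow> card (ends e \<inter> C) = 1" if "e \<in> F" for e
  proof -
    have "finite (ends e)" using assms(3) that card.infinite by force
    then have "card (ends e \<inter> C) \<le> 2"
      using assms(3) that card_mono[of "ends e" "ends e \<inter> C"] by simp
    then show ?thesis by (auto simp: le_Suc_eq numeral_2_eq_2)
  qed
  then have "{e\<in>F. odd (card (ends e \<inter> C))} = cut_edges F ends C"
    unfolding cut_edges_def by blast
  then show ?thesis
    using sum_degree[OF assms(1,2), of ends] even_sum_iff[OF assms(1), of "\<lambda>e. card (ends e \<inter> C)"]
    by simp
qed

lemma cut_edges_component:
  assumes G: "multigraph V E ends" and F: "F \<subseteq> E"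
    and C: "C \<in> components (edge_adj E ends) (V - S)" and e: "e \<in> cut_edges F ends C"
  obtains a b where "ends e = {a, b}" "a \<in> C" "b \<in> S"
proof -
  have "e \<in> E" "card (ends e \<inter> C) = 1" using e F unfolding cut_edges_def by auto
  then obtain a where a: "ends e \<inter> C = {a}" by (meson card_1_singletonE)
  then obtain b where b: "b \<noteq> a" "b \<in> V" "ends e = {a, b}"
    using multigraph_edge_at[OF G \<open>e \<in> E\<close>, of a] by blast
  have "b \<notin> C" using a b by blast
  moreover have "edge_adj E ends a b" using \<open>e \<in> E\<close> b(3) unfolding edge_adj_def by blast
  moreover have "adj_closed (edge_adj E ends) (V - S) C"
    using component_adj_closed_connected(1)[OF symp_edge_adj C] .
  ultimately have "b \<in> S"
    using a b(2) unfolding adj_closed_def by blast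
  then show ?thesis using that a b by blast
qed

lemma card_cut_edges_ge_1_component:
  assumes G: "multigraph V E ends" and F: "F \<subseteq> E"
    and C: "C \<in> components (edge_adj E ends) (V - S)" "odd (card C)"
    and deg: "\<forall>x\<in>C. degree F ends x = 1"
  shows "card (cut_edges F ends C) \<ge> 1"
proof -
  have "finite F" "finite C"
    using finite_subset[OF F multigraphD(2)[OF G]] finite_component[OF _ C(1)] multigraphD(1)[OF G]
    by auto
  moreover have "\<forall>e\<in>F. card (ends e) = 2" using F multigraphD(4)[OF G] by blast
  moreover have "(\<Sum>x\<in>C. degree F ends x) = card C" using deg by simp
  ultimately show ?thesis
    using even_sum_degree_iff[of F C ends] C(2) by (simp add: Suc_le_eq odd_pos)
qed

lemma cut_edges_disjoint:
  assumes G: "multigraph V E ends" and F: "F \<subseteq> E"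
    and C1: "C1 \<in> components (edge_adj E ends) (V - S)"
    and C2: "C2 \<in> components (edge_adj E ends) (V - S)" and "C1 \<noteq> C2"
  shows "cut_edges F ends C1 \<inter> cut_edges F ends C2 = {}"
proof (rule ccontr)
  assume "\<not> ?thesis"
  then obtain e where e: "e \<in> cut_edges F ends C1" "e \<in> cut_edges F ends C2" by blast
  obtain a b where ab: "ends e = {a, b}" "a \<in> C1" "b \<in> S"
    using cut_edges_component[OF G F C1 e(1)] .
  obtain a' b' where ab': "ends e = {a', b'}" "a' \<in> C2" "b' \<in> S"
    using cut_edges_component[OF G F C2 e(2)] .
  have "a \<notin> S" "a' \<notin> S" using ab ab' components_subset[OF C1] components_subset[OF C2] by blast+
  then have "a = a'" using ab ab' by (auto simp: doubleton_eq_iff)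
  then show False
    using components_disjoint[OF symp_edge_adj C1 C2 \<open>C1 \<noteq> C2\<close>] ab ab' by blast
qed

text \<open>Each edge of F leaving a component of G - S ends in S.\<close>

lemma sum_card_cut_edges_le:
  assumes G: "multigraph V E ends" and F: "F \<subseteq> E" and S: "S \<subseteq> V"
    and Cs: "Cs \<subseteq> components (edge_adj E ends) (V - S)"
  shows "(\<Sum>C\<in>Cs. card (cut_edges F ends C)) \<le> (\<Sum>s\<in>S. degree F ends s)"
proof -
  have "finite F" using finite_subset[OF F multigraphD(2)[OF G]] .
  have "(\<Sum>C\<in>Cs. card (cut_edges F ends C)) = card (\<Union>C\<in>Cs. cut_edges F ends C)"
  proof (rule card_UN_disjoint[symmetric])
    show "finite Cs"
      using finite_subset[OF Cs] multigraphD(1)[OF G] by (simp add: finite_components)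
    show "\<forall>C\<in>Cs. finite (cut_edges F ends C)"
      using \<open>finite F\<close> by (simp add: cut_edges_def)
    show "\<forall>C1\<in>Cs. \<forall>C2\<in>Cs. C1 \<noteq> C2 \<longrightarrow> cut_edges F ends C1 \<inter> cut_edges F ends C2 = {}"
      using cut_edges_disjoint[OF G F] Cs by (meson subsetD)
  qed
  also have "\<dots> \<le> card (\<Union>s\<in>S. {e\<in>F. s \<in> ends e})"
  proof (rule card_mono)
    show "finite (\<Union>s\<in>S. {e\<in>F. s \<in> ends e})"
      by (rule finite_subset[OF _ \<open>finite F\<close>]) blast
    show "(\<Union>C\<in>Cs. cut_edges F ends C) \<subseteq> (\<Union>s\<in>S. {e\<in>F. s \<in> ends e})"
    proof
      fix e assume "e \<in> (\<Union>C\<in>Cs. cut_edges F ends C)"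
      then obtain C where C: "C \<in> Cs" "e \<in> cut_edges F ends C" by blast
      from C(1) Cs have "C \<in> components (edge_adj E ends) (V - S)" by blast
      then obtain a b where "ends e = {a, b}" "b \<in> S"
        using C(2) by (rule cut_edges_component[OF G F])
      with C show "e \<in> (\<Union>s\<in>S. {e\<in>F. s \<in> ends e})"
        unfolding cut_edges_def by blast
    qed
  qed
  also have "\<dots> \<le> (\<Sum>s\<in>S. degree F ends s)"
    unfolding degree_def using finite_subset[OF S multigraphD(1)[OF G]] by (rule card_UN_le)
  finally show ?thesis .
qed

section \<open>Two-connected cubic graphs\<close>

lemma rtranclp_leaves_set:
  assumes "R\<^sup>*\<^sup>* x y" "x \<in> C" "y \<notin> C"
  shows "\<exists>u w. R u w \<and> u \<in> C \<and> w \<notin> C"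
  using assms
proof induction
  case (step y z)
  then show ?case by (cases "y \<in> C") auto
qed simp

lemma card_cut_edges_ne_1:
  assumes two_conn: "two_connected V E ends" and S: "S \<subseteq> V"
    and C: "C \<in> components (edge_adj E ends) (V - S)" and "card C \<ge> 2"
  shows "card (cut_edges E ends C) \<noteq> 1"
proof
  assume "card (cut_edges E ends C) = 1"
  then obtain e0 where e0: "cut_edges E ends C = {e0}" by (meson card_1_singletonE)
  have G: "multigraph V E ends" using two_conn unfolding two_connected_def by simp
  have "e0 \<in> cut_edges E ends C" using e0 by simp
  then obtain a b where ab: "ends e0 = {a, b}" "a \<in> C" "b \<in> S"
    by (rule cut_edges_component[OF G order_refl C])
  have CV: "C \<subseteq> V - S" using components_subset[OF C] .
  have "C \<noteq> {a}" using \<open>card C \<ge> 2\<close> by auto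
  then obtain z where z: "z \<in> C" "z \<noteq> a" using ab(2) by blast
  have "connected_in (V - {a}) E ends"
    using two_conn ab(2) CV unfolding two_connected_def by blast
  moreover have "z \<in> V - {a}" "b \<in> V - {a}" using z ab CV S by blast+
  ultimately have path: "(adj_on (edge_adj E ends) (V - {a}))\<^sup>*\<^sup>* z b"
    unfolding connected_in_iff by blast
  have "b \<notin> C" using ab CV by blast
  then obtain u w where uw: "adj_on (edge_adj E ends) (V - {a}) u w" "u \<in> C" "w \<notin> C"
    using rtranclp_leaves_set[OF path z(1)] by blast
  then obtain e where e: "e \<in> E" "ends e = {u, w}" "u \<noteq> a" "w \<noteq> a"
    unfolding adj_on_def edge_adj_def by blast
  then have "ends e \<inter> C = {u}" using uw by blast
  then have "e \<in> cut_edges E ends C" unfolding cut_edges_def using e(1) by simp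
  then have "a \<in> ends e" using e0 ab(1) by simp
  then show False using e by simp
qed

lemma card_cut_edges_ge_3:
  assumes two_conn: "two_connected V E ends" and cubic: "cubic V E ends" and S: "S \<subseteq> V"
    and C: "C \<in> components (edge_adj E ends) (V - S)" and odd: "odd (card C)"
  shows "card (cut_edges E ends C) \<ge> 3"
proof -
  have G: "multigraph V E ends" and deg: "\<forall>x\<in>V. degree E ends x = 3"
    using cubic unfolding cubic_def by auto
  have CV: "C \<subseteq> V" using components_subset[OF C] by blast
  have "finite C" using finite_subset[OF CV multigraphD(1)[OF G]] .
  have "(\<Sum>x\<in>C. degree E ends x) = 3 * card C" using deg CV by (simp add: subset_iff)
  then have odd_cut: "odd (card (cut_edges E ends C))"
    using even_sum_degree_iff[OF multigraphD(2)[OF G] \<open>finite C\<close>, of ends] multigraphD(4)[OF G] odd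
    by simp
  show ?thesis
  proof (cases "card C = 1")
    case True
    then obtain x where "C = {x}" by (meson card_1_singletonE)
    then have "card (cut_edges E ends C) = 3"
      using deg CV by (simp add: cut_edges_singleton degree_def)
    then show ?thesis by simp
  next
    case False
    then have "card C \<ge> 2" using odd by presburger
    then have "card (cut_edges E ends C) \<noteq> 1"
      by (rule card_cut_edges_ne_1[OF two_conn S C])
    with odd_cut show ?thesis by (auto elim!: oddE)
  qed
qed

lemma odd_comps_le_card_cubic:
  assumes two_conn: "two_connected V E ends" and cubic: "cubic V E ends" and S: "S \<subseteq> V"
  shows "odd_comps (edge_adj E ends) (V - S) \<le> card S"
proof -
  have G: "multigraph V E ends" and deg: "\<forall>x\<in>V. degree E ends x = 3"
    using cubic unfolding cubic_def by auto
  let ?Od = "{C \<in> components (edge_adj E ends) (V - S). odd (card C)}"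
  have "3 * card ?Od = (\<Sum>C\<in>?Od. 3)" by simp
  also have "\<dots> \<le> (\<Sum>C\<in>?Od. card (cut_edges E ends C))"
    using card_cut_edges_ge_3[OF two_conn cubic S] by (intro sum_mono) simp
  also have "\<dots> \<le> (\<Sum>s\<in>S. degree E ends s)"
    by (rule sum_card_cut_edges_le[OF G order_refl S]) blast
  also have "\<dots> = 3 * card S"
    using deg S by (simp add: subset_iff)
  finally show ?thesis unfolding odd_comps_def by simp
qed

lemma even_card_if_cubic:
  assumes "cubic V E ends"
  shows "even (card V)"
proof -
  have G: "multigraph V E ends" and deg: "\<forall>x\<in>V. degree E ends x = 3"
    using assms unfolding cubic_def by auto
  have "3 * card V = (\<Sum>x\<in>V. degree E ends x)" using deg by simp
  also have "\<dots> = (\<Sum>e\<in>E. card (ends e \<inter> V))"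
    using multigraphD(1,2)[OF G] by (rule sum_degree[rotated])
  also have "\<dots> = (\<Sum>e\<in>E. 2)"
    using multigraphD(3,4)[OF G] by (intro sum.cong) (simp_all add: Int_absorb2)
  finally have "3 * card V = 2 * card E" by simp
  then show ?thesis by presburger
qed

lemma matching_edges_of_involution:
  assumes m: "matching_involution (edge_adj E ends) W m"
  obtains M where "M \<subseteq> E" "\<forall>x\<in>W. degree M ends x = 1" "\<forall>e\<in>M. ends e \<subseteq> W"
proof -
  define edge where "edge x = (SOME e. e \<in> E \<and> ends e = {x, m x})" for x
  have m_x: "m x \<in> W" "m x \<noteq> x" "edge_adj E ends x (m x)" "m (m x) = x" if "x \<in> W" for x
    using m that unfolding matching_involution_def by auto
  have edge: "edge x \<in> E \<and> ends (edge x) = {x, m x}" if "x \<in> W" for x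
  proof -
    have "\<exists>e. e \<in> E \<and> ends e = {x, m x}" using m_x(3)[OF that] unfolding edge_adj_def by blast
    then show ?thesis unfolding edge_def by (rule someI_ex)
  qed
  have edge_m: "edge (m x) = edge x" if "x \<in> W" for x
    unfolding edge_def using m_x(4)[OF that] by (metis insert_commute)
  have "{e\<in>edge ` W. x \<in> ends e} = {edge x}" if "x \<in> W" for x
  proof
    show "{e\<in>edge ` W. x \<in> ends e} \<subseteq> {edge x}"
      using edge edge_m by fastforce
  qed (use that edge in auto)
  then have "\<forall>x\<in>W. degree (edge ` W) ends x = 1"
    unfolding degree_def by simp
  moreover have "edge ` W \<subseteq> E" "\<forall>e\<in>edge ` W. ends e \<subseteq> W"
    using edge m_x(1) by auto
  ultimately show ?thesis using that by blast
qed

lemma ex_perfect_matching_cubic: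
  assumes "two_connected V E ends" "cubic V E ends"
  shows "\<exists>M. perfect_matching V E ends M"
proof -
  have "finite V" using assms(2) by (simp add: cubic_def multigraph_def)
  moreover have "tutte_condition (edge_adj E ends) V"
    unfolding tutte_condition_def using odd_comps_le_card_cubic[OF assms] by blast
  ultimately obtain m where "matching_involution (edge_adj E ends) V m"
    using tutte_matching[OF symp_edge_adj] by blast
  then show ?thesis
    unfolding perfect_matching_def by (rule matching_edges_of_involution) blast
qed

section \<open>Lambda-matchable vertices\<close>

lemma not_lambda_matchable_if_isolated_in_barrier:
  assumes G: "multigraph V E ends" and barrier: "barrier V E ends B"
    and iso: "isolated_in_minus V E ends B v"
  shows "\<not> lambda_matchable V E ends v"
proof
  assume "lambda_matchable V E ends v"
  then obtain F where F: "F \<subseteq> E" and deg_v: "degree F ends v = 3"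
    and deg: "\<forall>x\<in>V - {v}. degree F ends x = 1"
    unfolding lambda_matchable_def v_matching_def by blast
  have B: "B \<subseteq> V" and tight: "odd_comps (edge_adj E ends) (V - B) = card B"
    using barrier unfolding barrier_def odd_components_eq_odd_comps by simp_all
  have v: "v \<in> V - B" using iso unfolding isolated_in_minus_def by blast
  let ?Od = "{C \<in> components (edge_adj E ends) (V - B). odd (card C)}"
  have v_comp: "{v} \<in> components (edge_adj E ends) (V - B)"
  proof (rule singleton_component[OF symp_edge_adj v], intro ballI impI)
    fix y assume "y \<in> V - B" "edge_adj E ends v y"
    then show "y = v" using iso unfolding isolated_in_minus_def edge_adj_def by blast
  qed
  then have v_Od: "{v} \<in> ?Od" by simp
  have fin_Od: "finite ?Od" using multigraphD(1)[OF G] by (simp add: finite_components)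
  have cut_nonempty: "card (cut_edges F ends C) \<ge> 1" if C: "C \<in> ?Od - {{v}}" for C
  proof (rule card_cut_edges_ge_1_component[OF G F])
    show C': "C \<in> components (edge_adj E ends) (V - B)" "odd (card C)" using C by simp_all
    have "v \<notin> C" using components_disjoint[OF symp_edge_adj C'(1) v_comp] C by auto
    then show "\<forall>x\<in>C. degree F ends x = 1" using deg components_subset[OF C'(1)] by blast
  qed
  have "card (?Od - {{v}}) \<le> (\<Sum>C\<in>?Od - {{v}}. card (cut_edges F ends C))"
    unfolding card_eq_sum[of "?Od - {{v}}"] by (rule sum_mono) (rule cut_nonempty)
  moreover have "card (cut_edges F ends {v}) = 3"
    using deg_v by (simp add: cut_edges_singleton degree_def)
  ultimately have "card B + 2 \<le> (\<Sum>C\<in>?Od. card (cut_edges F ends C))"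
    using sum.remove[OF fin_Od v_Od, of "\<lambda>C. card (cut_edges F ends C)"] fin_Od v_Od tight
    unfolding odd_comps_def by simp
  also have "\<dots> \<le> (\<Sum>b\<in>B. degree F ends b)"
    by (rule sum_card_cut_edges_le[OF G F B]) blast
  also have "\<dots> = (\<Sum>b\<in>B. 1)"
    using deg B v by (intro sum.cong) auto
  also have "\<dots> = card B" by simp
  finally show False by simp
qed

definition neighbours :: "'e set \<Rightarrow> ('e \<Rightarrow> 'v set) \<Rightarrow> 'v \<Rightarrow> 'v set" where
  "neighbours E ends v = (\<Union>e\<in>{e\<in>E. v \<in> ends e}. ends e - {v})"

lemma edge_to_neighbour:
  assumes G: "multigraph V E ends" and "e \<in> E" "v \<in> ends e"
  obtains y where "y \<in> neighbours E ends v" "ends e = {v, y}"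
proof -
  obtain y where "y \<noteq> v" "ends e = {v, y}"
    by (rule multigraph_edge_at[OF assms])
  then show ?thesis using that assms(2,3) unfolding neighbours_def by blast
qed

lemma neighbours_subset:
  assumes "multigraph V E ends"
  shows "neighbours E ends v \<subseteq> V - {v}"
  unfolding neighbours_def using multigraphD(3)[OF assms] by blast

lemma neighboursI: "edge_adj E ends v y \<Longrightarrow> y \<noteq> v \<Longrightarrow> y \<in> neighbours E ends v"
  unfolding neighbours_def edge_adj_def by blast

lemma card_neighbours_le_3:
  assumes cubic: "cubic V E ends" and v: "v \<in> V"
  shows "card (neighbours E ends v) \<le> 3"
proof -
  have G: "multigraph V E ends" using cubic unfolding cubic_def by simp
  let ?Ev = "{e\<in>E. v \<in> ends e}"
  have "card (neighbours E ends v) \<le> (\<Sum>e\<in>?Ev. card (ends e - {v}))"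
    unfolding neighbours_def using multigraphD(2)[OF G] by (intro card_UN_le) simp
  also have "\<dots> = (\<Sum>e\<in>?Ev. 1)"
  proof (rule sum.cong)
    fix e assume "e \<in> ?Ev"
    then have "e \<in> E" "v \<in> ends e" by simp_all
    then obtain y where "y \<noteq> v" "ends e = {v, y}"
      by (rule multigraph_edge_at[OF G])
    then show "card (ends e - {v}) = 1" by auto
  qed simp
  also have "\<dots> = 3"
    using cubic v unfolding cubic_def degree_def by simp
  finally show ?thesis .
qed

lemma eq_1_if_sum_le_card:
  fixes f :: "'a \<Rightarrow> nat"
  assumes "finite N" "\<forall>y\<in>N. 1 \<le> f y" "sum f N \<le> card N" "y \<in> N"
  shows "f y = 1"
proof -
  have "card (N - {y}) \<le> sum f (N - {y})"
    using assms(2) sum_mono[of "N - {y}" "\<lambda>_. 1" f] by simp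
  moreover have "sum f N = f y + sum f (N - {y})"
    using assms(1,4) by (rule sum.remove)
  moreover have "card N = card (N - {y}) + 1"
    using card_Suc_Diff1[OF assms(1,4)] by simp
  moreover have "1 \<le> f y" using assms(2,4) by blast
  ultimately show ?thesis using assms(3) by linarith
qed

lemma card_edges_to_neighbour:
  assumes cubic: "cubic V E ends" and v: "v \<in> V"
    and three: "card (neighbours E ends v) = 3" and y: "y \<in> neighbours E ends v"
  shows "card {e\<in>E. v \<in> ends e \<and> y \<in> ends e} = 1"
proof -
  have G: "multigraph V E ends" using cubic unfolding cubic_def by simp
  let ?N = "neighbours E ends v" and ?Ev = "{e\<in>E. v \<in> ends e}"
  let ?Ex = "\<lambda>y. {e\<in>E. v \<in> ends e \<and> y \<in> ends e}"
  have fin: "finite ?Ev" "finite ?N"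
    using multigraphD(1,2)[OF G] finite_subset[OF neighbours_subset[OF G]] by auto
  have at_least_1: "\<forall>y\<in>?N. 1 \<le> card (?Ex y)"
  proof
    fix y assume "y \<in> ?N"
    then have "?Ex y \<noteq> {}" unfolding neighbours_def by blast
    moreover have "finite (?Ex y)" using multigraphD(2)[OF G] by simp
    ultimately show "1 \<le> card (?Ex y)" by (simp add: Suc_le_eq card_gt_0_iff)
  qed
  have "(\<Sum>y\<in>?N. card (?Ex y)) = card (\<Union>y\<in>?N. ?Ex y)"
  proof (rule card_UN_disjoint[symmetric])
    show "\<forall>y\<in>?N. \<forall>z\<in>?N. y \<noteq> z \<longrightarrow> ?Ex y \<inter> ?Ex z = {}"
    proof (intro ballI impI equals0I)
      fix y z e assume yz: "y \<in> ?N" "z \<in> ?N" "y \<noteq> z" and e: "e \<in> ?Ex y \<inter> ?Ex z"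
      then have "e \<in> E" "v \<in> ends e" by simp_all
      then obtain w where "ends e = {v, w}"
        by (rule multigraph_edge_at[OF G])
      moreover have "y \<noteq> v" "z \<noteq> v" using yz neighbours_subset[OF G] by blast+
      ultimately show False using e yz(3) by blast
    qed
  qed (use fin multigraphD(2)[OF G] in simp_all)
  moreover have "card (\<Union>y\<in>?N. ?Ex y) \<le> card ?Ev"
    using fin by (intro card_mono) auto
  moreover have "card ?Ev = 3"
    using cubic v unfolding cubic_def degree_def by simp
  ultimately have "(\<Sum>y\<in>?N. card (?Ex y)) \<le> card ?N"
    using three by linarith
  from eq_1_if_sum_le_card[OF fin(2) at_least_1 this y] show ?thesis .
qed

lemma lambda_matchable_if_matching_avoids_neighbours:
  assumes cubic: "cubic V E ends" and v: "v \<in> V"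
    and three: "card (neighbours E ends v) = 3"
    and M: "M \<subseteq> E" "\<forall>x\<in>V - insert v (neighbours E ends v). degree M ends x = 1"
      "\<forall>e\<in>M. ends e \<subseteq> V - insert v (neighbours E ends v)"
  shows "lambda_matchable V E ends v"
proof -
  have G: "multigraph V E ends" using cubic unfolding cubic_def by simp
  let ?N = "neighbours E ends v" and ?Ev = "{e\<in>E. v \<in> ends e}"
  have at_v: "{e \<in> M \<union> ?Ev. v \<in> ends e} = ?Ev" using M(3) by blast
  have at_N: "{e \<in> M \<union> ?Ev. y \<in> ends e} = {e\<in>E. v \<in> ends e \<and> y \<in> ends e}" if "y \<in> ?N" for y
    using M(3) that by blast
  have at_W: "{e \<in> M \<union> ?Ev. x \<in> ends e} = {e \<in> M. x \<in> ends e}"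
    if "x \<in> V - insert v ?N" for x
  proof -
    have "x \<notin> ends e" if "e \<in> ?Ev" for e
      using edge_to_neighbour[OF G, of e v] that \<open>x \<in> V - insert v ?N\<close> by auto
    then show ?thesis by blast
  qed
  have "v_matching V E ends v (M \<union> ?Ev)"
    unfolding v_matching_def degree_def
  proof (intro conjI ballI)
    show "M \<union> ?Ev \<subseteq> E" using M(1) by blast
    show "card {e \<in> M \<union> ?Ev. v \<in> ends e} = 3"
      using cubic v unfolding at_v cubic_def degree_def by simp
    fix x assume x: "x \<in> V - {v}"
    show "card {e \<in> M \<union> ?Ev. x \<in> ends e} = 1"
    proof (cases "x \<in> ?N")
      case True
      then show ?thesis using card_edges_to_neighbour[OF cubic v three] at_N by simp
    next
      case False
      then show ?thesis using M(2) at_W x unfolding degree_def by simp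
    qed
  qed
  then show ?thesis unfolding lambda_matchable_def by blast
qed

lemma odd_comps_neighbours_Un:
  assumes two_conn: "two_connected V E ends" and cubic: "cubic V E ends" and v: "v \<in> V"
    and T: "T \<subseteq> V - insert v (neighbours E ends v)"
    and many: "card T + card (neighbours E ends v)
      \<le> odd_comps (edge_adj E ends) (V - insert v (neighbours E ends v) - T) + 2"
  shows "odd_comps (edge_adj E ends) (V - (neighbours E ends v \<union> T))
    = card (neighbours E ends v \<union> T)"
proof -
  have G: "multigraph V E ends" using cubic unfolding cubic_def by simp
  let ?A = "edge_adj E ends" and ?N = "neighbours E ends v"
  let ?B = "?N \<union> T"
  have B: "?B \<subseteq> V" using T neighbours_subset[OF G] by blast
  have fin: "finite V" "finite ?B" using multigraphD(1)[OF G] finite_subset[OF B] by auto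
  have "v \<in> V - ?B" using v T neighbours_subset[OF G] by blast
  moreover have "\<forall>y\<in>V - ?B. ?A v y \<longrightarrow> y = v"
    using neighboursI[of E ends v] by blast
  ultimately have "odd_comps ?A (V - ?B) = odd_comps ?A (V - ?B - {v}) + 1"
    using fin(1) by (intro odd_comps_isolated[OF symp_edge_adj]) simp_all
  moreover have "V - ?B - {v} = V - insert v ?N - T" by blast
  ultimately have "odd_comps ?A (V - ?B) = odd_comps ?A (V - insert v ?N - T) + 1"
    by simp
  moreover have "card ?B = card ?N + card T"
    using fin T by (intro card_Un_disjoint) (auto intro: finite_subset)
  ultimately have ge: "card ?B \<le> odd_comps ?A (V - ?B) + 1"
    using many by linarith
  have le: "odd_comps ?A (V - ?B) \<le> card ?B"
    by (rule odd_comps_le_card_cubic[OF two_conn cubic B])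
  have parity: "even (odd_comps ?A (V - ?B)) \<longleftrightarrow> even (card ?B)"
    using odd_comps_Diff_parity[OF symp_edge_adj fin(1) B even_card_if_cubic[OF cubic]] .
  show ?thesis
  proof (rule ccontr)
    assume "odd_comps ?A (V - ?B) \<noteq> card ?B"
    then have "card ?B = odd_comps ?A (V - ?B) + 1" using le ge by linarith
    then show False using parity by simp
  qed
qed

lemma ex_tutte_set_avoiding_neighbours:
  assumes cubic: "cubic V E ends" and v: "v \<in> V"
    and not_matchable: "\<not> lambda_matchable V E ends v"
  obtains T where "T \<subseteq> V - insert v (neighbours E ends v)"
    "card T + card (neighbours E ends v)
      \<le> odd_comps (edge_adj E ends) (V - insert v (neighbours E ends v) - T) + 2"
proof (cases "tutte_condition (edge_adj E ends) (V - insert v (neighbours E ends v))")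
  case True
  have "finite V" using cubic by (simp add: cubic_def multigraph_def)
  with True obtain m
    where "matching_involution (edge_adj E ends) (V - insert v (neighbours E ends v)) m"
    using tutte_matching[OF symp_edge_adj] by blast
  then obtain M where "M \<subseteq> E" "\<forall>x\<in>V - insert v (neighbours E ends v). degree M ends x = 1"
    "\<forall>e\<in>M. ends e \<subseteq> V - insert v (neighbours E ends v)"
    by (rule matching_edges_of_involution)
  then have "card (neighbours E ends v) \<noteq> 3"
    using lambda_matchable_if_matching_avoids_neighbours[OF cubic v] not_matchable by blast
  then have "card (neighbours E ends v) \<le> 2"
    using card_neighbours_le_3[OF cubic v] by simp
  then show ?thesis using that[of "{}"] by simp
next
  case False
  then obtain T where "T \<subseteq> V - insert v (neighbours E ends v)"
    "card T < odd_comps (edge_adj E ends) (V - insert v (neighbours E ends v) - T)"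
    unfolding tutte_condition_def by (auto simp: not_le)
  then show ?thesis using that card_neighbours_le_3[OF cubic v] by simp
qed

lemma isolated_barrier_if_not_lambda_matchable:
  assumes two_conn: "two_connected V E ends" and cubic: "cubic V E ends" and v: "v \<in> V"
    and not_matchable: "\<not> lambda_matchable V E ends v"
  shows "\<exists>B. barrier V E ends B \<and> isolated_in_minus V E ends B v"
proof -
  have G: "multigraph V E ends" using cubic unfolding cubic_def by simp
  obtain T where T: "T \<subseteq> V - insert v (neighbours E ends v)"
    and many: "card T + card (neighbours E ends v)
      \<le> odd_comps (edge_adj E ends) (V - insert v (neighbours E ends v) - T) + 2"
    using ex_tutte_set_avoiding_neighbours[OF cubic v not_matchable] by blast
  let ?B = "neighbours E ends v \<union> T"
  have "?B \<subseteq> V" using T neighbours_subset[OF G] by blast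
  then have "barrier V E ends ?B"
    unfolding barrier_def odd_components_eq_odd_comps
    using ex_perfect_matching_cubic[OF two_conn cubic]
      odd_comps_neighbours_Un[OF two_conn cubic v T many]
    by blast
  moreover have "isolated_in_minus V E ends ?B v"
    unfolding isolated_in_minus_def
  proof (intro conjI ballI impI)
    have "v \<notin> neighbours E ends v" using neighbours_subset[OF G] by blast
    then show "v \<in> V - ?B" using v T by blast
    fix e assume "e \<in> E" "v \<in> ends e"
    then show "ends e - {v} \<subseteq> ?B" unfolding neighbours_def by blast
  qed
  ultimately show ?thesis by blast
qed

theorem lemma1p4:
  fixes V :: "'v set" and E :: "'e set" and ends :: "'e \<Rightarrow> 'v set" and v :: 'v
  assumes "two_connected V E ends" and "cubic V E ends" and "v \<in> V"
  shows "\<not> lambda_matchable V E ends v \<longleftrightarrow>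
         (\<exists>B. barrier V E ends B \<and> isolated_in_minus V E ends B v)"
proof
  assume "\<not> lambda_matchable V E ends v"
  then show "\<exists>B. barrier V E ends B \<and> isolated_in_minus V E ends B v"
    by (rule isolated_barrier_if_not_lambda_matchable[OF assms])
next
  assume "\<exists>B. barrier V E ends B \<and> isolated_in_minus V E ends B v"
  then obtain B where "barrier V E ends B" "isolated_in_minus V E ends B v" by blast
  moreover have "multigraph V E ends" using assms(2) unfolding cubic_def by simp
  ultimately show "\<not> lambda_matchable V E ends v"
    by (intro not_lambda_matchable_if_isolated_in_barrier)
qed

end
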